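(* Let $\lambda,\mu$ be partitions with at most $n$ parts (viewed as elements of $\mathbb{Z}^n$) such that $|\lambda|\ge|\mu|$. Then $$\widetilde{K}^{C_n}_{\lambda,\mu}(q)=q^{\frac{|\lambda|-|\mu|}{2}}\sum_{\gamma\in\widetilde{\mathcal{P}}_n}\ \sum_{\sigma\in S_n}(-1)^{l(\sigma)}\,c(\sigma\circ\lambda-\gamma)\,K^{A_{n-1}}_{\gamma,\mu}(q),$$ $$\widetilde{K}^{D_n}_{\lambda,\mu}(q)=q^{\frac{|\lambda|-|\mu|}{2}}\sum_{\gamma\in\widetilde{\mathcal{P}}_n}\ \sum_{\sigma\in S_n}(-1)^{l(\sigma)}\,d(\sigma\circ\lambda-\gamma)\,K^{A_{n-1}}_{\gamma,\mu}(q).$$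
   Context: Fix $n\ge1$. Notation: $x^\beta=x_1^{\beta_1}\cdots x_n^{\beta_n}$, $|\beta|=\sum_i\beta_i$, $\rho_n=(n,n-1,\dots,1)$. The symmetric group $S_n$ acts on $\mathbb{Z}^n$ by permuting coordinates; $l(\sigma)$ is the number of inversions of $\sigma$; the dot action is $\sigma\circ\beta=\sigma(\beta+\rho_n)-\rho_n$. $\widetilde{\mathcal{P}}_n=\{\gamma\in\mathbb{Z}^n:\gamma_1\ge\cdots\ge\gamma_n\}$. $q$-partition functions: $\mathcal{P}^A_q(\beta)$, $\mathcal{P}^C_q(\beta)$, $\mathcal{P}^D_q(\beta)$ are the coefficients of $x^\beta$ in respectively $\prod_{i<j}(1-qx_i/x_j)^{-1}$, $\prod_{i<j}(1-qx_i/x_j)^{-1}\prod_{r\le s}(1-qx_rx_s)^{-1}$, $\prod_{i<j}(1-qx_i/x_j)^{-1}\prod_{r<s}(1-qx_rx_s)^{-1}$ (all indices in $\{1,\dots,n\}$). $c(\beta)$ (resp. $d(\beta)$) is the coefficient of $x^{-\beta}$ in $\prod_{1\le r\le s\le n}(1-\frac1{x_rx_s})^{-1}$ (resp. $\prod_{1\le r<s\le n}(1-\frac1{x_rx_s})^{-1}$). For $\gamma,\mu\in\mathbb{Z}^n$: $K^{A_{n-1}}_{\gamma,\mu}(q)=\sum_{\sigma\in S_n}(-1)^{l(\sigma)}\mathcal{P}^A_q(\sigma(\gamma+\rho_n)-(\mu+\rho_n))$ (for partitions this is the usual Kostka–Foulkes polynomial), and for $X\in\{C,D\}$: $\widetilde{K}^{X_n}_{\lambda,\mu}(q)=\sum_{\sigma\in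 S_n}(-1)^{l(\sigma)}\mathcal{P}^X_q(\sigma(\lambda+\rho_n)-(\mu+\rho_n))$. *)

theory Defs
  imports "HOL-Combinatorics.Permutations" "HOL-Computational_Algebra.Polynomial"
begin

(* Vectors in Z^n are functions nat => int; only the coordinates 0..<n matter
   (coordinate i+1 of the paper is index i here). *)
type_synonym zvec = "nat \<Rightarrow> int"

definition unitv :: "nat \<Rightarrow> zvec" where
  "unitv i = (\<lambda>k. if k = i then 1 else 0)"

definition wt :: "nat \<Rightarrow> zvec \<Rightarrow> int" where
  "wt n \<beta> = (\<Sum>i<n. \<beta> i)"

definition rho :: "nat \<Rightarrow> zvec" where
  "rho n = (\<lambda>i. if i < n then int n - int i else 0)"

definition inversions :: "nat \<Rightarrow> (nat \<Rightarrow> nat) \<Rightarrow> nat" where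
  "inversions n \<sigma> = card {(i, j). i < j \<and> j < n \<and> \<sigma> j < \<sigma> i}"

definition pact :: "(nat \<Rightarrow> nat) \<Rightarrow> zvec \<Rightarrow> zvec" where
  "pact \<sigma> \<beta> = \<beta> \<circ> inv \<sigma>"

definition vadd :: "zvec \<Rightarrow> zvec \<Rightarrow> zvec" where
  "vadd \<alpha> \<beta> = (\<lambda>i. \<alpha> i + \<beta> i)"

definition vsub :: "zvec \<Rightarrow> zvec \<Rightarrow> zvec" where
  "vsub \<alpha> \<beta> = (\<lambda>i. \<alpha> i - \<beta> i)"

definition dotact :: "nat \<Rightarrow> (nat \<Rightarrow> nat) \<Rightarrow> zvec \<Rightarrow> zvec" where
  "dotact n \<sigma> \<beta> = vsub (pact \<sigma> (vadd \<beta> (rho n))) (rho n)"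

definition Sn :: "nat \<Rightarrow> (nat \<Rightarrow> nat) set" where
  "Sn n = {\<sigma>. \<sigma> permutes {0..<n}}"

definition Ptilde :: "nat \<Rightarrow> zvec set" where
  "Ptilde n = {\<gamma>. (\<forall>i. n \<le> i \<longrightarrow> \<gamma> i = 0) \<and> (\<forall>i j. i \<le> j \<longrightarrow> j < n \<longrightarrow> \<gamma> j \<le> \<gamma> i)}"

definition is_partition :: "nat \<Rightarrow> zvec \<Rightarrow> bool" where
  "is_partition n lam \<longleftrightarrow> lam \<in> Ptilde n \<and> (\<forall>i<n. 0 \<le> lam i)"

definition rootsA :: "nat \<Rightarrow> zvec set" where
  "rootsA n = {vsub (unitv i) (unitv j) | i j. i < j \<and> j < n}"

definition longC :: "nat \<Rightarrow> zvec set" where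
  "longC n = {vadd (unitv r) (unitv s) | r s. r \<le> s \<and> s < n}"

definition longD :: "nat \<Rightarrow> zvec set" where
  "longD n = {vadd (unitv r) (unitv s) | r s. r < s \<and> s < n}"

(* multiplicity functions m on a set R of (distinct) vectors with sum_alpha m(alpha) alpha = beta:
   expanding prod_{alpha in R} (1 - q x^alpha)^{-1} = sum_m q^{|m|} x^{sum m(alpha) alpha} *)
definition mults :: "nat \<Rightarrow> zvec set \<Rightarrow> zvec \<Rightarrow> (zvec \<Rightarrow> nat) set" where
  "mults n R \<beta> = {m. (\<forall>\<alpha>. \<alpha> \<notin> R \<longrightarrow> m \<alpha> = 0) \<and>
                     (\<forall>i<n. (\<Sum>\<alpha>\<in>R. int (m \<alpha>) * \<alpha> i) = \<beta> i)}"

(* coefficient of x^beta in prod_{alpha in R} (1 - q x^alpha)^{-1}, a polynomial in q *)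
definition qpart :: "nat \<Rightarrow> zvec set \<Rightarrow> zvec \<Rightarrow> int poly" where
  "qpart n R \<beta> = (\<Sum>m\<in>mults n R \<beta>. monom 1 (\<Sum>\<alpha>\<in>R. m \<alpha>))"

definition PA :: "nat \<Rightarrow> zvec \<Rightarrow> int poly" where
  "PA n \<beta> = qpart n (rootsA n) \<beta>"

definition PC :: "nat \<Rightarrow> zvec \<Rightarrow> int poly" where
  "PC n \<beta> = qpart n (rootsA n \<union> longC n) \<beta>"

definition PD :: "nat \<Rightarrow> zvec \<Rightarrow> int poly" where
  "PD n \<beta> = qpart n (rootsA n \<union> longD n) \<beta>"

(* c(beta), d(beta): coefficient of x^{-beta} in prod (1 - 1/(x_r x_s))^{-1} *)
definition cC :: "nat \<Rightarrow> zvec \<Rightarrow> int" where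
  "cC n \<beta> = int (card (mults n (longC n) \<beta>))"

definition dD :: "nat \<Rightarrow> zvec \<Rightarrow> int" where
  "dD n \<beta> = int (card (mults n (longD n) \<beta>))"

definition altsum :: "nat \<Rightarrow> (zvec \<Rightarrow> int poly) \<Rightarrow> zvec \<Rightarrow> zvec \<Rightarrow> int poly" where
  "altsum n P lam \<mu> = (\<Sum>\<sigma>\<in>Sn n. (-1) ^ inversions n \<sigma> *
       P (vsub (pact \<sigma> (vadd lam (rho n))) (vadd \<mu> (rho n))))"

definition KA :: "nat \<Rightarrow> zvec \<Rightarrow> zvec \<Rightarrow> int poly" where
  "KA n \<gamma> \<mu> = altsum n (PA n) \<gamma> \<mu>"

definition KC :: "nat \<Rightarrow> zvec \<Rightarrow> zvec \<Rightarrow> int poly" where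
  "KC n lam \<mu> = altsum n (PC n) lam \<mu>"

definition KD :: "nat \<Rightarrow> zvec \<Rightarrow> zvec \<Rightarrow> int poly" where
  "KD n lam \<mu> = altsum n (PD n) lam \<mu>"

definition rhs_term :: "nat \<Rightarrow> (zvec \<Rightarrow> int) \<Rightarrow> zvec \<Rightarrow> zvec \<Rightarrow> zvec \<Rightarrow> int poly" where
  "rhs_term n cf lam \<mu> \<gamma> = (\<Sum>\<sigma>\<in>Sn n. (-1) ^ inversions n \<sigma> *
       smult (cf (vsub (dotact n \<sigma> lam) \<gamma>)) (KA n \<gamma> \<mu>))"

(* the sum over gamma in Ptilde_n, understood as a sum over the (finite) support *)
definition rhs :: "nat \<Rightarrow> (zvec \<Rightarrow> int) \<Rightarrow> zvec \<Rightarrow> zvec \<Rightarrow> int poly" where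
  "rhs n cf lam \<mu> = monom 1 (nat ((wt n lam - wt n \<mu>) div 2)) *
     (\<Sum>\<gamma>\<in>{\<gamma>\<in>Ptilde n. rhs_term n cf lam \<mu> \<gamma> \<noteq> 0}. rhs_term n cf lam \<mu> \<gamma>)"

end

theory Submission
  imports Defs
begin

(* The generating function of type C is that of type A times the one of the long roots
   e_r + e_s, r <= s; every long root has weight 2, so
   P^C_q(beta) = sum_delta q^(|delta|/2) c(delta) P^A_q(beta - delta).  Inserting this into the
   alternating sum defining the C-type Kostka polynomial gives sum_nu A(nu) P^A_q(nu - mu) with the
   alternant A(nu) = sum_sigma (-1)^l(sigma) q^(|sigma o lambda - nu|/2) c(sigma o lambda - nu).
   The long roots form an S_n-invariant set, hence A(tau o nu) = (-1)^l(tau) A(nu): A vanishes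
   when nu + rho has a repeated entry, and every other nu is tau o gamma for a unique dominant
   gamma and permutation tau.  Summing over these dot-orbits turns the P^A_q into
   K^{A_{n-1}}_{gamma,mu}(q).  Type D is the same with the long roots e_r + e_s, r < s. *)

definition lt_pairs :: "nat \<Rightarrow> (nat \<times> nat) set" where
  "lt_pairs n = {(i, j). i < j \<and> j < n}"

definition sgn_prod :: "nat \<Rightarrow> (nat \<Rightarrow> nat) \<Rightarrow> int" where
  "sgn_prod n \<sigma> = (\<Prod>p\<in>lt_pairs n. sgn (int (\<sigma> (snd p)) - int (\<sigma> (fst p))))"

lemma finite_lt_pairs: "finite (lt_pairs n)"
  by (rule finite_subset[of _ "{..<n} \<times> {..<n}"]) (auto simp: lt_pairs_def)

lemma sgn_prod_eq_inversions:
  assumes "inj_on \<sigma> {..<n}"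
  shows "sgn_prod n \<sigma> = (-1) ^ inversions n \<sigma>"
proof -
  let ?inv = "{p. \<sigma> (snd p) < \<sigma> (fst p)}"
  have "sgn_prod n \<sigma> = (\<Prod>p\<in>lt_pairs n. if p \<in> ?inv then -1 else 1)"
    unfolding sgn_prod_def
  proof (rule prod.cong[OF refl])
    fix p assume "p \<in> lt_pairs n"
    then obtain i j where p: "p = (i, j)" "i < j" "j < n" by (auto simp: lt_pairs_def)
    then have "\<sigma> i \<noteq> \<sigma> j" using assms unfolding inj_on_def by fastforce
    then show "sgn (int (\<sigma> (snd p)) - int (\<sigma> (fst p))) = (if p \<in> ?inv then -1 else 1)"
      using p by (auto simp: sgn_if)
  qed
  also have "\<dots> = (-1) ^ card (lt_pairs n \<inter> ?inv)"
    by (simp add: prod.If_cases[OF finite_lt_pairs])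
  also have "lt_pairs n \<inter> ?inv = {(i, j). i < j \<and> j < n \<and> \<sigma> j < \<sigma> i}"
    by (auto simp: lt_pairs_def)
  finally show ?thesis by (simp add: inversions_def)
qed

definition sorted_image :: "(nat \<Rightarrow> nat) \<Rightarrow> nat \<times> nat \<Rightarrow> nat \<times> nat" where
  "sorted_image \<tau> p = (min (\<tau> (fst p)) (\<tau> (snd p)), max (\<tau> (fst p)) (\<tau> (snd p)))"

lemma sorted_image_in_lt_pairs:
  assumes "\<tau> permutes {..<n}" "p \<in> lt_pairs n"
  shows "sorted_image \<tau> p \<in> lt_pairs n"
proof -
  obtain i j where p: "p = (i, j)" "i < j" "j < n" using assms(2) by (auto simp: lt_pairs_def)
  then have "\<tau> i \<noteq> \<tau> j" "\<tau> i < n" "\<tau> j < n"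
    using permutes_inj[OF assms(1)] permutes_in_image[OF assms(1)] by (auto simp: inj_eq)
  then show ?thesis using p by (auto simp: sorted_image_def lt_pairs_def min_def max_def)
qed

lemma sorted_image_inv_sorted_image:
  assumes "\<tau> permutes {..<n}" "p \<in> lt_pairs n"
  shows "sorted_image (inv \<tau>) (sorted_image \<tau> p) = p"
proof -
  obtain i j where p: "p = (i, j)" "i < j" using assms(2) by (auto simp: lt_pairs_def)
  then show ?thesis
    using permutes_inverses(2)[OF assms(1)]
    by (cases "\<tau> i \<le> \<tau> j") (auto simp: sorted_image_def min_def max_def)
qed

lemma bij_betw_sorted_image:
  assumes "\<tau> permutes {..<n}"
  shows "bij_betw (sorted_image \<tau>) (lt_pairs n) (lt_pairs n)"
proof (rule bij_betw_byWitness[where f' = "sorted_image (inv \<tau>)"])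
  have inv: "\<tau> permutes {..<n}" "inv \<tau> permutes {..<n}" "inv (inv \<tau>) = \<tau>"
    using assms permutes_inv permutes_inv_inv by blast+
  show "\<forall>p\<in>lt_pairs n. sorted_image (inv \<tau>) (sorted_image \<tau> p) = p"
    "\<forall>p\<in>lt_pairs n. sorted_image \<tau> (sorted_image (inv \<tau>) p) = p"
    using sorted_image_inv_sorted_image[OF inv(1)] sorted_image_inv_sorted_image[OF inv(2)] inv(3)
    by auto
  show "sorted_image \<tau> ` lt_pairs n \<subseteq> lt_pairs n" "sorted_image (inv \<tau>) ` lt_pairs n \<subseteq> lt_pairs n"
    using sorted_image_in_lt_pairs[OF inv(1)] sorted_image_in_lt_pairs[OF inv(2)] by auto
qed

lemma sgn_prod_compose:
  assumes \<sigma>: "\<sigma> permutes {..<n}" and \<tau>: "\<tau> permutes {..<n}"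
  shows "sgn_prod n (\<sigma> \<circ> \<tau>) = sgn_prod n \<sigma> * sgn_prod n \<tau>"
proof -
  define g where "g = (\<lambda>p. sgn (int (\<sigma> (snd p)) - int (\<sigma> (fst p))))"
  have "inj \<tau>" using \<tau> permutes_inj by blast
  have split: "sgn (int ((\<sigma> \<circ> \<tau>) (snd p)) - int ((\<sigma> \<circ> \<tau>) (fst p)))
      = g (sorted_image \<tau> p) * sgn (int (\<tau> (snd p)) - int (\<tau> (fst p)))" if p_in: "p \<in> lt_pairs n" for p
  proof -
    obtain i j where p: "p = (i, j)" "i < j" using p_in by (auto simp: lt_pairs_def)
    then have "\<tau> i \<noteq> \<tau> j" using \<open>inj \<tau>\<close> by (auto simp: inj_eq)
    then show ?thesis using p
      by (cases "\<tau> i < \<tau> j") (simp_all add: g_def sorted_image_def min_def max_def sgn_if)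
  qed
  have "sgn_prod n (\<sigma> \<circ> \<tau>) = (\<Prod>p\<in>lt_pairs n. g (sorted_image \<tau> p) * sgn (int (\<tau> (snd p)) - int (\<tau> (fst p))))"
    unfolding sgn_prod_def using split by (rule prod.cong[OF refl])
  also have "\<dots> = (\<Prod>p\<in>lt_pairs n. g (sorted_image \<tau> p)) * sgn_prod n \<tau>"
    by (simp add: prod.distrib sgn_prod_def)
  also have "(\<Prod>p\<in>lt_pairs n. g (sorted_image \<tau> p)) = sgn_prod n \<sigma>"
    using prod.reindex_bij_betw[OF bij_betw_sorted_image[OF \<tau>], of g]
    by (simp add: sgn_prod_def g_def)
  finally show ?thesis .
qed

lemma inversions_transpose:
  assumes "a < b" "b < n"
  shows "inversions n (Transposition.transpose a b) = 2 * (b - a) - 1"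
proof -
  have "{(i, j). i < j \<and> j < n \<and> Transposition.transpose a b j < Transposition.transpose a b i}
      = {a} \<times> {a<..b} \<union> {a<..<b} \<times> {b}"
    using assms by (auto simp: Transposition.transpose_def split: if_splits)
  moreover have "card ({a} \<times> {a<..b} \<union> {a<..<b} \<times> {b}) = (b - a) + (b - a - 1)"
    by (subst card_Un_disjoint) (auto simp: card_cartesian_product)
  ultimately show ?thesis using assms by (simp add: inversions_def)
qed

lemma sgn_prod_eq_sign:
  assumes "\<sigma> permutes {..<n}"
  shows "sgn_prod n \<sigma> = sign \<sigma>"
  using assms finite_lessThan
proof (induction rule: permutes_induct)
  case id
  show ?case unfolding sgn_prod_def by (simp add: lt_pairs_def prod.neutral)
next
  case (swap a b p)
  have t: "Transposition.transpose a b permutes {..<n}"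
    using swap by (intro permutes_swap_id) auto
  have "sgn_prod n (Transposition.transpose a b) = -1"
  proof (cases "a < b")
    case True
    then show ?thesis using swap
      by (simp add: sgn_prod_eq_inversions inversions_transpose)
  next
    case False
    then show ?thesis using swap
      by (simp add: sgn_prod_eq_inversions inversions_transpose transpose_commute[of a b])
  qed
  then have "sgn_prod n (Transposition.transpose a b \<circ> p) = - sign p"
    using sgn_prod_compose[OF t \<open>p permutes {..<n}\<close>] swap.IH by simp
  also have "\<dots> = sign (Transposition.transpose a b \<circ> p)"
    using sign_compose[OF permutes_imp_permutation[OF _ t] permutes_imp_permutation[OF _ \<open>p permutes {..<n}\<close>]]
      \<open>a \<noteq> b\<close> by (simp add: sign_swap_id)
  finally show ?case .
qed

theorem inversions_sign:
  assumes "\<sigma> permutes {..<n}"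
  shows "(-1) ^ inversions n \<sigma> = (of_int (sign \<sigma>) :: 'a :: ring_1)"
proof -
  have "(-1) ^ inversions n \<sigma> = sign \<sigma>"
    using sgn_prod_eq_sign[OF assms] sgn_prod_eq_inversions[OF permutes_inj_on[OF assms]] by simp
  then show ?thesis by (metis of_int_1 of_int_minus of_int_power)
qed

lemma Sn_eq: "Sn n = {\<sigma>. \<sigma> permutes {..<n}}"
  by (simp add: Sn_def atLeast0LessThan)

lemma permutes_less_iff: "\<sigma> permutes {..<n} \<Longrightarrow> \<sigma> i < n \<longleftrightarrow> i < n"
  using permutes_in_image[of \<sigma> "{..<n}" i] by simp

lemma permutes_inv_less_iff: "\<sigma> permutes {..<n} \<Longrightarrow> inv \<sigma> i < n \<longleftrightarrow> i < n"
  using permutes_less_iff[OF permutes_inv] .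

definition vecs :: "nat \<Rightarrow> zvec set" where
  "vecs n = {v. \<forall>i\<ge>n. v i = 0}"

lemma vecs_eqI: "a \<in> vecs n \<Longrightarrow> b \<in> vecs n \<Longrightarrow> (\<And>i. i < n \<Longrightarrow> a i = b i) \<Longrightarrow> a = b"
proof (rule ext)
  fix i assume "a \<in> vecs n" "b \<in> vecs n" "\<And>i. i < n \<Longrightarrow> a i = b i"
  then show "a i = b i" unfolding vecs_def by (cases "i < n") auto
qed

lemma vadd_apply [simp]: "vadd a b i = a i + b i"
  by (simp add: vadd_def)

lemma vsub_apply [simp]: "vsub a b i = a i - b i"
  by (simp add: vsub_def)

lemma unitv_in_vecs: "i < n \<Longrightarrow> unitv i \<in> vecs n"
  by (simp add: vecs_def unitv_def)

lemma rho_in_vecs: "rho n \<in> vecs n"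
  by (simp add: vecs_def rho_def)

lemma vadd_in_vecs: "a \<in> vecs n \<Longrightarrow> b \<in> vecs n \<Longrightarrow> vadd a b \<in> vecs n"
  by (simp add: vecs_def)

lemma vsub_in_vecs: "a \<in> vecs n \<Longrightarrow> b \<in> vecs n \<Longrightarrow> vsub a b \<in> vecs n"
  by (simp add: vecs_def)

lemma pact_in_vecs: "\<beta> \<in> vecs n \<Longrightarrow> \<sigma> permutes {..<n} \<Longrightarrow> pact \<sigma> \<beta> \<in> vecs n"
  by (simp add: vecs_def pact_def permutes_not_in[OF permutes_inv])

lemma dotact_in_vecs: "\<beta> \<in> vecs n \<Longrightarrow> \<sigma> permutes {..<n} \<Longrightarrow> dotact n \<sigma> \<beta> \<in> vecs n"
  unfolding dotact_def by (intro vsub_in_vecs pact_in_vecs vadd_in_vecs rho_in_vecs)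

lemma pact_pact:
  "\<sigma> permutes {..<n} \<Longrightarrow> \<tau> permutes {..<n} \<Longrightarrow> pact \<sigma> (pact \<tau> \<beta>) = pact (\<sigma> \<circ> \<tau>) \<beta>"
  by (simp add: pact_def o_inv_distrib permutes_bij o_assoc)

lemma pact_inv_pact:
  assumes "\<tau> permutes {..<n}"
  shows "pact (inv \<tau>) (pact \<tau> \<alpha>) = \<alpha>" "pact \<tau> (pact (inv \<tau>) \<alpha>) = \<alpha>"
  by (simp_all add: pact_def fun_eq_iff permutes_inv_inv[OF assms] permutes_inverses[OF assms])

lemma pact_vadd: "pact \<sigma> (vadd a b) = vadd (pact \<sigma> a) (pact \<sigma> b)"
  by (simp add: pact_def vadd_def fun_eq_iff)

lemma pact_unitv:
  assumes "\<tau> permutes {..<n}"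
  shows "pact \<tau> (unitv r) = unitv (\<tau> r)"
  using permutes_inv_eq[OF assms] by (auto simp: pact_def unitv_def fun_eq_iff)

lemma vadd_rho_dotact: "vadd (dotact n \<tau> \<beta>) (rho n) = pact \<tau> (vadd \<beta> (rho n))"
  by (simp add: dotact_def fun_eq_iff)

lemma dotact_dotact:
  "\<sigma> permutes {..<n} \<Longrightarrow> \<tau> permutes {..<n} \<Longrightarrow> dotact n \<sigma> (dotact n \<tau> \<beta>) = dotact n (\<sigma> \<circ> \<tau>) \<beta>"
  by (simp add: dotact_def vadd_rho_dotact[unfolded dotact_def] pact_pact)

lemma dotact_id: "dotact n id \<beta> = \<beta>"
  by (simp add: dotact_def pact_def fun_eq_iff)

lemma dotact_inv_dotact:
  assumes "\<tau> permutes {..<n}"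
  shows "dotact n (inv \<tau>) (dotact n \<tau> \<beta>) = \<beta>" "dotact n \<tau> (dotact n (inv \<tau>) \<beta>) = \<beta>"
  using assms by (simp_all add: dotact_dotact permutes_inv permutes_inv_o dotact_id)

lemma wt_pact: "\<sigma> permutes {..<n} \<Longrightarrow> wt n (pact \<sigma> \<beta>) = wt n \<beta>"
  unfolding wt_def pact_def using sum.permute[OF permutes_inv, of \<sigma> "{..<n}" \<beta>] by simp

lemma wt_vadd: "wt n (vadd a b) = wt n a + wt n b"
  by (simp add: wt_def sum.distrib)

lemma wt_vsub: "wt n (vsub a b) = wt n a - wt n b"
  by (simp add: wt_def sum_subtractf)

lemma wt_dotact: "\<sigma> permutes {..<n} \<Longrightarrow> wt n (dotact n \<sigma> \<beta>) = wt n \<beta>"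
  by (simp add: dotact_def wt_vsub wt_pact wt_vadd)

lemma wt_unitv: "i < n \<Longrightarrow> wt n (unitv i) = 1"
  unfolding wt_def unitv_def by simp

lemma sum_unitv_mult: "i < n \<Longrightarrow> (\<Sum>k<n. unitv i k * f k) = f i"
proof -
  assume i: "i < n"
  have "(\<Sum>k<n. unitv i k * f k) = (\<Sum>k<n. if k = i then f k else 0)"
    by (rule sum.cong) (auto simp: unitv_def)
  then show ?thesis using i by simp
qed

definition strict_dec :: "nat \<Rightarrow> zvec \<Rightarrow> bool" where
  "strict_dec n w \<longleftrightarrow> (\<forall>i j. i < j \<longrightarrow> j < n \<longrightarrow> w j < w i)"

lemma Ptilde_iff_strict_dec:
  assumes "\<nu> \<in> vecs n"
  shows "\<nu> \<in> Ptilde n \<longleftrightarrow> strict_dec n (vadd \<nu> (rho n))"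
proof
  assume \<nu>: "\<nu> \<in> Ptilde n"
  show "strict_dec n (vadd \<nu> (rho n))"
    unfolding strict_dec_def
  proof (intro allI impI)
    fix i j assume "i < j" "j < n"
    moreover have "\<nu> j \<le> \<nu> i" using \<nu> \<open>i < j\<close> \<open>j < n\<close> by (simp add: Ptilde_def)
    ultimately show "vadd \<nu> (rho n) j < vadd \<nu> (rho n) i" by (simp add: rho_def)
  qed
next
  assume dec: "strict_dec n (vadd \<nu> (rho n))"
  \<comment> \<open>adjacent entries of \<open>\<nu> + \<rho>\<close> drop by at least 1, exactly the drop of \<open>\<rho>\<close>\<close>
  have "\<nu> j \<le> \<nu> i" if "i \<le> j" "j < n" for i j
    using that
  proof (induction j)
    case (Suc j)
    then show ?case
      using dec[unfolded strict_dec_def, rule_format, of j "Suc j"]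
      by (cases "i = Suc j") (auto simp: rho_def)
  qed simp
  then show "\<nu> \<in> Ptilde n" using assms by (simp add: Ptilde_def vecs_def)
qed

lemma Ptilde_in_vecs: "\<gamma> \<in> Ptilde n \<Longrightarrow> \<gamma> \<in> vecs n"
  by (simp add: Ptilde_def vecs_def)

lemma exists_dotact_Ptilde:
  assumes \<nu>: "\<nu> \<in> vecs n" and inj: "inj_on (vadd \<nu> (rho n)) {..<n}"
  obtains \<tau> where "\<tau> permutes {..<n}" "dotact n (inv \<tau>) \<nu> \<in> Ptilde n"
proof -
  define w where "w = vadd \<nu> (rho n)"
  define xs where "xs = map w [0..<n]"
  define ys where "ys = rev (sort xs)"
  have "mset ys = mset xs" by (simp add: ys_def)
  then obtain p where p: "p permutes {..<length xs}" "permute_list p xs = ys"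
    by (rule mset_eq_permutation)
  have len: "length xs = n" "length (sort xs) = n" by (simp_all add: xs_def)
  have pn: "p permutes {..<n}" using p len by simp
  have ys_nth: "ys ! i = w (p i)" if "i < n" for i
  proof -
    have "ys ! i = xs ! p i" using p permute_list_nth[OF p(1)] that len by auto
    also have "\<dots> = w (p i)" using permutes_less_iff[OF pn, of i] that by (simp add: xs_def)
    finally show ?thesis .
  qed
  have "distinct xs" unfolding xs_def w_def using inj
    by (simp add: distinct_map atLeast0LessThan[symmetric])
  then have sorted: "sorted_wrt (<) (sort xs)" by (simp add: strict_sorted_iff)
  have ys_dec: "ys ! j < ys ! i" if "i < j" "j < n" for i j
    using sorted_wrt_nth_less[OF sorted, of "n - Suc j" "n - Suc i"] that len
    by (simp add: ys_def rev_nth)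
  define \<gamma> where "\<gamma> = dotact n (inv p) \<nu>"
  have "vadd \<gamma> (rho n) i = w (p i)" for i
    unfolding \<gamma>_def vadd_rho_dotact w_def using permutes_inv_inv[OF pn] by (simp add: pact_def)
  then have "strict_dec n (vadd \<gamma> (rho n))"
    using ys_nth ys_dec by (simp add: strict_dec_def)
  moreover have "\<gamma> \<in> vecs n" unfolding \<gamma>_def by (rule dotact_in_vecs[OF \<nu> permutes_inv[OF pn]])
  ultimately show ?thesis using that pn Ptilde_iff_strict_dec \<gamma>_def by blast
qed

lemma permutes_strict_mono_on_eq_id:
  fixes \<pi> :: "nat \<Rightarrow> nat"
  assumes p: "\<pi> permutes {..<n}" and mono: "strict_mono_on {..<n} \<pi>"
  shows "\<pi> = id"
proof -
  have ge: "i \<le> \<pi> i" if "i < n" for i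
    using that
  proof (induction i)
    case (Suc i)
    then have "\<pi> i < \<pi> (Suc i)" using mono by (simp add: strict_mono_on_def)
    then show ?case using Suc by simp
  qed simp
  \<comment> \<open>\<open>\<pi>\<close> only rearranges the summands of \<open>\<Sum>i<n. i\<close>, so none of them can grow\<close>
  have "\<pi> i = i" if "i < n" for i
  proof (rule ccontr)
    assume "\<pi> i \<noteq> i"
    then have "i < \<pi> i" using ge[OF that] by simp
    have "(\<Sum>i<n. i) < (\<Sum>i<n. \<pi> i)"
      by (intro sum_strict_mono_ex1) (use ge that \<open>i < \<pi> i\<close> in auto)
    then show False using sum.permute[OF p, of id] by simp
  qed
  then show ?thesis
    using permutes_not_in[OF p] by (metis eq_id_iff lessThan_iff)
qed

lemma strict_dec_comp_permutes_eq_id: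
  assumes a: "strict_dec n a" and a\<pi>: "strict_dec n (a \<circ> \<pi>)" and \<pi>: "\<pi> permutes {..<n}"
  shows "\<pi> = id"
proof (rule permutes_strict_mono_on_eq_id[OF \<pi> strict_mono_onI])
  fix i j assume "i \<in> {..<n}" "j \<in> {..<n}" "i < j"
  then have lt: "i < j" "j < n" "\<pi> i < n" "\<pi> j < n" using permutes_less_iff[OF \<pi>] by auto
  then have "\<pi> i \<noteq> \<pi> j" using permutes_inj[OF \<pi>] by (auto simp: inj_eq)
  moreover have "\<not> \<pi> j < \<pi> i"
    using a a\<pi> lt unfolding strict_dec_def by (metis comp_apply less_asym)
  ultimately show "\<pi> i < \<pi> j" by simp
qed

lemma dotact_inj_on_Ptilde:
  assumes \<gamma>: "\<gamma> \<in> Ptilde n" and \<gamma>': "\<gamma>' \<in> Ptilde n"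
    and \<tau>: "\<tau> permutes {..<n}" and \<tau>': "\<tau>' permutes {..<n}"
    and eq: "dotact n \<tau> \<gamma> = dotact n \<tau>' \<gamma>'"
  shows "\<gamma> = \<gamma>'" "\<tau> = \<tau>'"
proof -
  define \<pi> where "\<pi> = inv \<tau> \<circ> \<tau>'"
  have \<pi>: "\<pi> permutes {..<n}" unfolding \<pi>_def by (intro permutes_compose permutes_inv \<tau> \<tau>')
  have shift: "vadd \<gamma>' (rho n) = vadd \<gamma> (rho n) \<circ> \<pi>"
  proof
    fix i
    have "pact \<tau> (vadd \<gamma> (rho n)) (\<tau>' i) = pact \<tau>' (vadd \<gamma>' (rho n)) (\<tau>' i)"
      using eq by (simp only: vadd_rho_dotact[symmetric])
    then show "vadd \<gamma>' (rho n) i = (vadd \<gamma> (rho n) \<circ> \<pi>) i"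
      unfolding pact_def \<pi>_def using permutes_inverses(2)[OF \<tau>'] by simp
  qed
  have "strict_dec n (vadd \<gamma> (rho n))" "strict_dec n (vadd \<gamma>' (rho n))"
    using Ptilde_iff_strict_dec Ptilde_in_vecs \<gamma> \<gamma>' by blast+
  then have "\<pi> = id"
    using strict_dec_comp_permutes_eq_id[of n "vadd \<gamma> (rho n)" \<pi>] \<pi> shift by simp
  moreover have "\<tau>' = \<tau> \<circ> \<pi>"
    unfolding \<pi>_def by (simp add: o_assoc permutes_inv_o[OF \<tau>])
  ultimately show "\<tau> = \<tau>'" by simp
  then show "\<gamma> = \<gamma>'"
    using arg_cong[OF eq, of "dotact n (inv \<tau>)"] dotact_inv_dotact(1)[OF \<tau>] by simp
qed

definition rho_positive :: "nat \<Rightarrow> zvec set \<Rightarrow> bool" where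
  "rho_positive n R \<longleftrightarrow> (\<forall>\<alpha>\<in>R. 1 \<le> (\<Sum>k<n. \<alpha> k * rho n k))"

definition lincomb :: "zvec set \<Rightarrow> (zvec \<Rightarrow> nat) \<Rightarrow> zvec" where
  "lincomb R m = (\<lambda>k. \<Sum>\<alpha>\<in>R. int (m \<alpha>) * \<alpha> k)"

lemma mults_lincomb:
  "mults n R \<beta> = {m. (\<forall>\<alpha>. \<alpha> \<notin> R \<longrightarrow> m \<alpha> = 0) \<and> (\<forall>i<n. lincomb R m i = \<beta> i)}"
  by (simp add: mults_def lincomb_def)

lemma sum_mult_mults:
  assumes "finite R" "m \<in> mults n R w"
  shows "(\<Sum>i<n. w i * f i) = (\<Sum>\<alpha>\<in>R. int (m \<alpha>) * (\<Sum>i<n. \<alpha> i * f i))"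
proof -
  have "(\<Sum>i<n. w i * f i) = (\<Sum>i<n. (\<Sum>\<alpha>\<in>R. int (m \<alpha>) * \<alpha> i) * f i)"
    using assms(2) by (simp add: mults_def)
  also have "\<dots> = (\<Sum>i<n. \<Sum>\<alpha>\<in>R. int (m \<alpha>) * (\<alpha> i * f i))"
    by (simp add: sum_distrib_right mult.assoc)
  also have "\<dots> = (\<Sum>\<alpha>\<in>R. int (m \<alpha>) * (\<Sum>i<n. \<alpha> i * f i))"
    by (subst sum.swap) (simp add: sum_distrib_left)
  finally show ?thesis .
qed

lemma wt_mults:
  assumes "finite R" "m \<in> mults n R w"
  shows "wt n w = (\<Sum>\<alpha>\<in>R. int (m \<alpha>) * wt n \<alpha>)"
  using sum_mult_mults[OF assms, of "\<lambda>_. 1"] by (simp add: wt_def)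

lemma finite_mults:
  assumes "finite R" and pos: "rho_positive n R"
  shows "finite (mults n R w)"
proof -
  define N where "N = nat (\<Sum>i<n. w i * rho n i)"
  \<comment> \<open>pairing with \<open>\<rho>\<close> bounds every multiplicity by \<open>\<langle>w, \<rho>\<rangle>\<close>\<close>
  have "m \<alpha> \<le> N" if m: "m \<in> mults n R w" and \<alpha>: "\<alpha> \<in> R" for m \<alpha>
  proof -
    have "int (m \<alpha>) \<le> int (m \<alpha>) * (\<Sum>i<n. \<alpha> i * rho n i)"
      using pos \<alpha> by (simp add: rho_positive_def mult_le_cancel_left1)
    also have "\<dots> \<le> (\<Sum>\<beta>\<in>R. int (m \<beta>) * (\<Sum>i<n. \<beta> i * rho n i))"
      using pos \<alpha> assms(1) unfolding rho_positive_def
      by (intro member_le_sum) (auto intro: order_trans[OF zero_le_one])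
    also have "\<dots> = (\<Sum>i<n. w i * rho n i)"
      by (rule sum_mult_mults[OF assms(1) m, symmetric])
    finally show ?thesis by (simp add: N_def)
  qed
  then have "mults n R w \<subseteq> {m. \<forall>\<alpha>. (\<alpha> \<in> R \<longrightarrow> m \<alpha> \<in> {..N}) \<and> (\<alpha> \<notin> R \<longrightarrow> m \<alpha> = 0)}"
    by (auto simp: mults_def)
  moreover have "finite {m. \<forall>\<alpha>. (\<alpha> \<in> R \<longrightarrow> m \<alpha> \<in> {..N}) \<and> (\<alpha> \<notin> R \<longrightarrow> m \<alpha> = 0)}"
    using assms(1) by (intro finite_set_of_finite_funs) auto
  ultimately show ?thesis by (rule finite_subset)
qed

lemma mults_add:
  assumes fin: "finite R" "finite L"
    and mL: "mL \<in> mults n L \<delta>" and mR: "mR \<in> mults n R \<gamma>"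
  shows "(\<lambda>\<alpha>. mL \<alpha> + mR \<alpha>) \<in> mults n (R \<union> L) (vadd \<delta> \<gamma>)"
  unfolding mults_lincomb
proof (intro CollectI conjI allI impI)
  fix \<alpha> assume "\<alpha> \<notin> R \<union> L"
  then show "mL \<alpha> + mR \<alpha> = 0" using mL mR by (simp add: mults_def)
next
  fix k assume "k < n"
  have "lincomb (R \<union> L) (\<lambda>\<alpha>. mL \<alpha> + mR \<alpha>) k = lincomb (R \<union> L) mL k + lincomb (R \<union> L) mR k"
    by (simp add: lincomb_def distrib_right sum.distrib)
  also have "lincomb (R \<union> L) mL k = lincomb L mL k"
    unfolding lincomb_def using fin mL by (intro sum.mono_neutral_right) (auto simp: mults_def)
  also have "lincomb (R \<union> L) mR k = lincomb R mR k"
    unfolding lincomb_def using fin mR by (intro sum.mono_neutral_right) (auto simp: mults_def)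
  finally show "lincomb (R \<union> L) (\<lambda>\<alpha>. mL \<alpha> + mR \<alpha>) k = vadd \<delta> \<gamma> k"
    using mL mR \<open>k < n\<close> by (simp add: mults_lincomb)
qed

lemma mults_restrict:
  assumes fin: "finite R" "finite L" and disj: "R \<inter> L = {}"
    and m: "m \<in> mults n (R \<union> L) \<beta>"
  shows "(\<lambda>\<alpha>. if \<alpha> \<in> L then m \<alpha> else 0) \<in> mults n L (lincomb L m)"
    and "(\<lambda>\<alpha>. if \<alpha> \<in> R then m \<alpha> else 0) \<in> mults n R (vsub \<beta> (lincomb L m))"
proof -
  show "(\<lambda>\<alpha>. if \<alpha> \<in> L then m \<alpha> else 0) \<in> mults n L (lincomb L m)"
    by (simp add: mults_lincomb lincomb_def)
  have "lincomb (R \<union> L) m k = lincomb R m k + lincomb L m k" for k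
    unfolding lincomb_def using fin disj by (intro sum.union_disjoint) auto
  then show "(\<lambda>\<alpha>. if \<alpha> \<in> R then m \<alpha> else 0) \<in> mults n R (vsub \<beta> (lincomb L m))"
    using m by (simp add: mults_lincomb lincomb_def eq_diff_eq)
qed

lemma lincomb_mults:
  assumes "L \<subseteq> vecs n" "\<delta> \<in> vecs n" "m \<in> mults n L \<delta>"
  shows "lincomb L m = \<delta>"
proof (rule vecs_eqI)
  show "lincomb L m \<in> vecs n"
    using assms(1) by (auto simp: vecs_def lincomb_def intro!: sum.neutral)
qed (use assms in \<open>simp_all add: mults_lincomb\<close>)

lemma mults_split_combine:
  assumes disj: "R \<inter> L = {}" and LV: "L \<subseteq> vecs n" and \<delta>: "\<delta> \<in> vecs n"
    and mL: "mL \<in> mults n L \<delta>" and mR: "mR \<in> mults n R \<gamma>"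
  shows "lincomb L (\<lambda>\<alpha>. mL \<alpha> + mR \<alpha>) = \<delta>"
    and "(\<lambda>\<alpha>. if \<alpha> \<in> L then mL \<alpha> + mR \<alpha> else 0) = mL"
    and "(\<lambda>\<alpha>. if \<alpha> \<in> R then mL \<alpha> + mR \<alpha> else 0) = mR"
proof -
  have mL0: "mL \<alpha> = 0" if "\<alpha> \<notin> L" for \<alpha> using mL that by (simp add: mults_def)
  have mR0: "mR \<alpha> = 0" if "\<alpha> \<notin> R" for \<alpha> using mR that by (simp add: mults_def)
  have "mR \<alpha> = 0" if "\<alpha> \<in> L" for \<alpha> using disj mR0 that by blast
  then have "lincomb L (\<lambda>\<alpha>. mL \<alpha> + mR \<alpha>) = lincomb L mL"
    unfolding lincomb_def by simp
  then show "lincomb L (\<lambda>\<alpha>. mL \<alpha> + mR \<alpha>) = \<delta>" using lincomb_mults[OF LV \<delta> mL] by simp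
  show "(\<lambda>\<alpha>. if \<alpha> \<in> L then mL \<alpha> + mR \<alpha> else 0) = mL"
    "(\<lambda>\<alpha>. if \<alpha> \<in> R then mL \<alpha> + mR \<alpha> else 0) = mR"
    using disj mL0 mR0 by (auto simp: fun_eq_iff)
qed

lemma bij_betw_mults_union:
  assumes fin: "finite R" "finite L" and disj: "R \<inter> L = {}" and LV: "L \<subseteq> vecs n"
    and SV: "S \<subseteq> vecs n"
    and S: "\<And>\<delta>. \<delta> \<in> vecs n \<Longrightarrow> mults n L \<delta> \<noteq> {} \<Longrightarrow> mults n R (vsub \<beta> \<delta>) \<noteq> {} \<Longrightarrow> \<delta> \<in> S"
  shows "bij_betw (\<lambda>(\<delta>, mL, mR) \<alpha>. mL \<alpha> + mR \<alpha>)
           (SIGMA \<delta>:S. mults n L \<delta> \<times> mults n R (vsub \<beta> \<delta>)) (mults n (R \<union> L) \<beta>)"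
proof (rule bij_betw_byWitness[where f' = "\<lambda>m. (lincomb L m, \<lambda>\<alpha>. if \<alpha> \<in> L then m \<alpha> else 0,
                                                 \<lambda>\<alpha>. if \<alpha> \<in> R then m \<alpha> else 0)"])
  have supp: "\<alpha> \<notin> A \<Longrightarrow> m \<alpha> = 0" if "m \<in> mults n A w" for A w m \<alpha>
    using that by (simp add: mults_def)
  have "(lincomb L (\<lambda>\<alpha>. mL \<alpha> + mR \<alpha>), \<lambda>\<alpha>. if \<alpha> \<in> L then mL \<alpha> + mR \<alpha> else 0,
        \<lambda>\<alpha>. if \<alpha> \<in> R then mL \<alpha> + mR \<alpha> else 0) = (\<delta>, mL, mR)"
    if "\<delta> \<in> S" "mL \<in> mults n L \<delta>" "mR \<in> mults n R (vsub \<beta> \<delta>)" for \<delta> mL mR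
    using mults_split_combine[OF disj LV _ that(2,3)] that(1) SV by auto
  then show "\<forall>a\<in>SIGMA \<delta>:S. mults n L \<delta> \<times> mults n R (vsub \<beta> \<delta>).
          (\<lambda>m. (lincomb L m, \<lambda>\<alpha>. if \<alpha> \<in> L then m \<alpha> else 0, \<lambda>\<alpha>. if \<alpha> \<in> R then m \<alpha> else 0))
            ((\<lambda>(\<delta>, mL, mR) \<alpha>. mL \<alpha> + mR \<alpha>) a) = a"
    by auto
  show "\<forall>m\<in>mults n (R \<union> L) \<beta>. (\<lambda>(\<delta>, mL, mR) \<alpha>. mL \<alpha> + mR \<alpha>)
          (lincomb L m, \<lambda>\<alpha>. if \<alpha> \<in> L then m \<alpha> else 0, \<lambda>\<alpha>. if \<alpha> \<in> R then m \<alpha> else 0) = m"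
    using disj supp by (auto simp: fun_eq_iff)
  show "(\<lambda>(\<delta>, mL, mR) \<alpha>. mL \<alpha> + mR \<alpha>) ` (SIGMA \<delta>:S. mults n L \<delta> \<times> mults n R (vsub \<beta> \<delta>))
          \<subseteq> mults n (R \<union> L) \<beta>"
  proof clarify
    fix \<delta> mL mR assume "mL \<in> mults n L \<delta>" "mR \<in> mults n R (vsub \<beta> \<delta>)"
    from mults_add[OF fin this] show "(\<lambda>\<alpha>. mL \<alpha> + mR \<alpha>) \<in> mults n (R \<union> L) \<beta>"
      by (simp add: vadd_def vsub_def)
  qed
  show "(\<lambda>m. (lincomb L m, \<lambda>\<alpha>. if \<alpha> \<in> L then m \<alpha> else 0, \<lambda>\<alpha>. if \<alpha> \<in> R then m \<alpha> else 0))
          ` mults n (R \<union> L) \<beta> \<subseteq> (SIGMA \<delta>:S. mults n L \<delta> \<times> mults n R (vsub \<beta> \<delta>))"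
  proof (rule image_subsetI)
    fix m assume m: "m \<in> mults n (R \<union> L) \<beta>"
    note parts = mults_restrict[OF fin disj m]
    have "lincomb L m \<in> vecs n"
      using LV by (auto simp: vecs_def lincomb_def intro!: sum.neutral)
    then have "lincomb L m \<in> S" using S parts by blast
    then show "(lincomb L m, \<lambda>\<alpha>. if \<alpha> \<in> L then m \<alpha> else 0, \<lambda>\<alpha>. if \<alpha> \<in> R then m \<alpha> else 0)
        \<in> (SIGMA \<delta>:S. mults n L \<delta> \<times> mults n R (vsub \<beta> \<delta>))"
      using parts by simp
  qed
qed

theorem qpart_union:
  assumes fin: "finite R" "finite L" and pos: "rho_positive n R" "rho_positive n L"
    and disj: "R \<inter> L = {}" and LV: "L \<subseteq> vecs n" and finS: "finite S" and SV: "S \<subseteq> vecs n"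
    and S: "\<And>\<delta>. \<delta> \<in> vecs n \<Longrightarrow> mults n L \<delta> \<noteq> {} \<Longrightarrow> mults n R (vsub \<beta> \<delta>) \<noteq> {} \<Longrightarrow> \<delta> \<in> S"
  shows "qpart n (R \<union> L) \<beta> = (\<Sum>\<delta>\<in>S. qpart n L \<delta> * qpart n R (vsub \<beta> \<delta>))"
proof -
  let ?SG = "SIGMA \<delta>:S. mults n L \<delta> \<times> mults n R (vsub \<beta> \<delta>)"
  have deg: "(\<Sum>\<alpha>\<in>R \<union> L. mL \<alpha> + mR \<alpha>) = (\<Sum>\<alpha>\<in>L. mL \<alpha>) + (\<Sum>\<alpha>\<in>R. mR \<alpha>)"
    if "mL \<in> mults n L \<delta>" "mR \<in> mults n R \<gamma>" for mL mR \<delta> \<gamma>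
  proof -
    have "sum mL (R \<union> L) = sum mL L" "sum mR (R \<union> L) = sum mR R"
      using that fin by (auto intro!: sum.mono_neutral_right simp: mults_def)
    then show ?thesis by (simp add: sum.distrib)
  qed
  have "(\<Sum>\<delta>\<in>S. qpart n L \<delta> * qpart n R (vsub \<beta> \<delta>))
      = (\<Sum>\<delta>\<in>S. \<Sum>(mL, mR)\<in>mults n L \<delta> \<times> mults n R (vsub \<beta> \<delta>).
            monom 1 ((\<Sum>\<alpha>\<in>L. mL \<alpha>) + (\<Sum>\<alpha>\<in>R. mR \<alpha>)))"
    unfolding qpart_def sum_product sum.cartesian_product by (simp add: mult_monom)
  also have "\<dots> = (\<Sum>(\<delta>, mL, mR)\<in>?SG. monom 1 ((\<Sum>\<alpha>\<in>L. mL \<alpha>) + (\<Sum>\<alpha>\<in>R. mR \<alpha>)))"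
    using finS finite_mults fin pos by (subst sum.Sigma) auto
  also have "\<dots> = (\<Sum>(\<delta>, mL, mR)\<in>?SG. monom 1 (\<Sum>\<alpha>\<in>R \<union> L. mL \<alpha> + mR \<alpha>))"
    by (intro sum.cong) (auto simp: deg)
  also have "\<dots> = qpart n (R \<union> L) \<beta>"
    unfolding qpart_def
    using sum.reindex_bij_betw[OF bij_betw_mults_union[OF fin disj LV SV S],
        where g = "\<lambda>m. monom 1 (\<Sum>\<alpha>\<in>R \<union> L. m \<alpha>)"]
    by (simp add: case_prod_beta')
  finally show ?thesis ..
qed

lemma finite_rootsA: "finite (rootsA n)"
proof (rule finite_subset)
  show "rootsA n \<subseteq> (\<lambda>(i, j). vsub (unitv i) (unitv j)) ` ({..<n} \<times> {..<n})"
    unfolding rootsA_def by force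
qed simp

lemma finite_longC: "finite (longC n)"
proof (rule finite_subset)
  show "longC n \<subseteq> (\<lambda>(r, s). vadd (unitv r) (unitv s)) ` ({..<n} \<times> {..<n})"
    unfolding longC_def by force
qed simp

lemma wt_rootsA: "\<alpha> \<in> rootsA n \<Longrightarrow> wt n \<alpha> = 0"
  by (auto simp: rootsA_def wt_vsub wt_unitv)

lemma wt_longC: "\<alpha> \<in> longC n \<Longrightarrow> wt n \<alpha> = 2"
  by (auto simp: longC_def wt_vadd wt_unitv)

lemma longC_subset_vecs: "longC n \<subseteq> vecs n"
  by (auto simp: longC_def intro!: vadd_in_vecs unitv_in_vecs)

lemma longC_nonneg: "\<alpha> \<in> longC n \<Longrightarrow> 0 \<le> \<alpha> k"
  by (auto simp: longC_def unitv_def)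

lemma rootsA_disjoint_longC: "rootsA n \<inter> longC n = {}"
  using wt_rootsA wt_longC by fastforce

lemma rho_positive_rootsA: "rho_positive n (rootsA n)"
  unfolding rho_positive_def
proof
  fix \<alpha> assume "\<alpha> \<in> rootsA n"
  then obtain i j where \<alpha>: "\<alpha> = vsub (unitv i) (unitv j)" "i < j" "j < n"
    by (auto simp: rootsA_def)
  then have "(\<Sum>k<n. \<alpha> k * rho n k) = rho n i - rho n j"
    by (simp add: left_diff_distrib sum_subtractf sum_unitv_mult)
  then show "1 \<le> (\<Sum>k<n. \<alpha> k * rho n k)" using \<alpha> by (simp add: rho_def)
qed

lemma rho_positive_longC: "rho_positive n (longC n)"
  unfolding rho_positive_def
proof
  fix \<alpha> assume "\<alpha> \<in> longC n"
  then obtain r s where \<alpha>: "\<alpha> = vadd (unitv r) (unitv s)" "r \<le> s" "s < n"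
    by (auto simp: longC_def)
  then have "(\<Sum>k<n. \<alpha> k * rho n k) = rho n r + rho n s"
    by (simp add: distrib_right sum.distrib sum_unitv_mult)
  then show "1 \<le> (\<Sum>k<n. \<alpha> k * rho n k)" using \<alpha> by (simp add: rho_def)
qed

lemma rho_positive_subset: "rho_positive n R \<Longrightarrow> L \<subseteq> R \<Longrightarrow> rho_positive n L"
  by (auto simp: rho_positive_def)

definition perm_invariant :: "nat \<Rightarrow> zvec set \<Rightarrow> bool" where
  "perm_invariant n R \<longleftrightarrow> (\<forall>\<tau> \<alpha>. \<tau> permutes {..<n} \<longrightarrow> \<alpha> \<in> R \<longrightarrow> pact \<tau> \<alpha> \<in> R)"

lemma perm_invariant_longC: "perm_invariant n (longC n)"
  unfolding perm_invariant_def
proof (intro allI impI)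
  fix \<tau> \<alpha> assume \<tau>: "\<tau> permutes {..<n}" and "\<alpha> \<in> longC n"
  then obtain r s where \<alpha>: "\<alpha> = vadd (unitv r) (unitv s)" "r \<le> s" "s < n"
    by (auto simp: longC_def)
  have p: "pact \<tau> \<alpha> = vadd (unitv (\<tau> r)) (unitv (\<tau> s))"
    using \<alpha> \<tau> by (simp add: pact_vadd pact_unitv)
  then have "pact \<tau> \<alpha> = vadd (unitv (\<tau> s)) (unitv (\<tau> r))"
    by (simp add: vadd_def add.commute)
  note p' = this
  have lt: "\<tau> r < n" "\<tau> s < n" using \<alpha>(2,3) permutes_less_iff[OF \<tau>] by simp_all
  show "pact \<tau> \<alpha> \<in> longC n"
  proof (cases "\<tau> r \<le> \<tau> s")
    case True
    then show ?thesis using p lt unfolding longC_def by blast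
  next
    case False
    then have "\<tau> s \<le> \<tau> r" by simp
    then show ?thesis using p' lt unfolding longC_def by blast
  qed
qed

lemma perm_invariant_longD: "perm_invariant n (longD n)"
  unfolding perm_invariant_def
proof (intro allI impI)
  fix \<tau> \<alpha> assume \<tau>: "\<tau> permutes {..<n}" and "\<alpha> \<in> longD n"
  then obtain r s where \<alpha>: "\<alpha> = vadd (unitv r) (unitv s)" "r < s" "s < n"
    by (auto simp: longD_def)
  have p: "pact \<tau> \<alpha> = vadd (unitv (\<tau> r)) (unitv (\<tau> s))"
    using \<alpha> \<tau> by (simp add: pact_vadd pact_unitv)
  then have "pact \<tau> \<alpha> = vadd (unitv (\<tau> s)) (unitv (\<tau> r))"
    by (simp add: vadd_def add.commute)
  note p' = this
  have lt: "\<tau> r < n" "\<tau> s < n" using \<alpha>(2,3) permutes_less_iff[OF \<tau>] by simp_all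
  have "\<tau> r \<noteq> \<tau> s" using \<alpha>(2) permutes_inj[OF \<tau>] by (auto simp: inj_eq)
  show "pact \<tau> \<alpha> \<in> longD n"
  proof (cases "\<tau> r < \<tau> s")
    case True
    then show ?thesis using p lt unfolding longD_def by blast
  next
    case False
    then have "\<tau> s < \<tau> r" using \<open>\<tau> r \<noteq> \<tau> s\<close> by simp
    then show ?thesis using p' lt unfolding longD_def by blast
  qed
qed

lemma longD_subset_longC: "longD n \<subseteq> longC n"
  unfolding longD_def longC_def by force

lemma bij_betw_pact:
  assumes "perm_invariant n R" "\<tau> permutes {..<n}"
  shows "bij_betw (pact \<tau>) R R"
proof (rule bij_betw_byWitness[where f' = "pact (inv \<tau>)"])
  show "pact \<tau> ` R \<subseteq> R" "pact (inv \<tau>) ` R \<subseteq> R"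
    using assms permutes_inv[OF assms(2)] by (auto simp: perm_invariant_def)
qed (simp_all add: pact_inv_pact[OF assms(2)])

lemma mults_pact:
  assumes R: "perm_invariant n R" and \<tau>: "\<tau> permutes {..<n}" and m: "m \<in> mults n R w"
  shows "m \<circ> pact \<tau> \<in> mults n R (pact (inv \<tau>) w)"
  unfolding mults_def
proof (intro CollectI conjI allI impI)
  fix \<alpha> assume "\<alpha> \<notin> R"
  have "pact \<tau> \<alpha> \<notin> R"
  proof
    assume "pact \<tau> \<alpha> \<in> R"
    then have "pact (inv \<tau>) (pact \<tau> \<alpha>) \<in> R"
      using R permutes_inv[OF \<tau>] unfolding perm_invariant_def by blast
    then show False using \<open>\<alpha> \<notin> R\<close> by (simp add: pact_inv_pact[OF \<tau>])
  qed
  then show "(m \<circ> pact \<tau>) \<alpha> = 0" using m by (simp add: mults_def)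
next
  fix i assume "i < n"
  have "(\<Sum>\<alpha>\<in>R. int ((m \<circ> pact \<tau>) \<alpha>) * \<alpha> i) = (\<Sum>\<alpha>\<in>R. int (m (pact \<tau> \<alpha>)) * pact \<tau> \<alpha> (\<tau> i))"
    by (simp add: pact_def permutes_inverses(2)[OF \<tau>])
  also have "\<dots> = (\<Sum>\<beta>\<in>R. int (m \<beta>) * \<beta> (\<tau> i))"
    by (rule sum.reindex_bij_betw[OF bij_betw_pact[OF R \<tau>], where g = "\<lambda>\<beta>. int (m \<beta>) * \<beta> (\<tau> i)"])
  also have "\<dots> = pact (inv \<tau>) w i"
    using m \<open>i < n\<close> permutes_less_iff[OF \<tau>] by (simp add: mults_def pact_def permutes_inv_inv[OF \<tau>])
  finally show "(\<Sum>\<alpha>\<in>R. int ((m \<circ> pact \<tau>) \<alpha>) * \<alpha> i) = pact (inv \<tau>) w i" .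
qed

lemma qpart_pact:
  assumes R: "perm_invariant n R" and \<tau>: "\<tau> permutes {..<n}"
  shows "qpart n R (pact \<tau> w) = qpart n R w"
  unfolding qpart_def
proof (rule sum.reindex_bij_witness[where j = "\<lambda>m. m \<circ> pact \<tau>" and i = "\<lambda>m. m \<circ> pact (inv \<tau>)"])
  fix m :: "zvec \<Rightarrow> nat"
  show "m \<circ> pact \<tau> \<circ> pact (inv \<tau>) = m" "m \<circ> pact (inv \<tau>) \<circ> pact \<tau> = m"
    by (simp_all add: comp_def pact_inv_pact[OF \<tau>])
  show "m \<in> mults n R (pact \<tau> w) \<Longrightarrow> m \<circ> pact \<tau> \<in> mults n R w"
    using mults_pact[OF R \<tau>, of m "pact \<tau> w"] by (simp add: pact_inv_pact[OF \<tau>])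
  show "m \<in> mults n R w \<Longrightarrow> m \<circ> pact (inv \<tau>) \<in> mults n R (pact \<tau> w)"
    using mults_pact[OF R permutes_inv[OF \<tau>], of m w] by (simp add: permutes_inv_inv[OF \<tau>])
  show "monom 1 (\<Sum>\<alpha>\<in>R. (m \<circ> pact \<tau>) \<alpha>) = monom 1 (\<Sum>\<alpha>\<in>R. m \<alpha>)"
    using sum.reindex_bij_betw[OF bij_betw_pact[OF R \<tau>], of m] by simp
qed

lemma mults_long_nonneg:
  assumes "L \<subseteq> longC n" "m \<in> mults n L w" "i < n"
  shows "0 \<le> w i"
proof -
  have "w i = (\<Sum>\<alpha>\<in>L. int (m \<alpha>) * \<alpha> i)" using assms(2,3) by (simp add: mults_def)
  also have "\<dots> \<ge> 0" using assms(1) longC_nonneg by (intro sum_nonneg) auto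
  finally show ?thesis .
qed

text \<open>Every long root has weight 2, so the \<open>q\<close>-degree of each term of \<open>qpart n L w\<close> is \<open>|w|/2\<close>.\<close>

lemma qpart_long:
  assumes L: "L \<subseteq> longC n"
  shows "qpart n L w = smult (int (card (mults n L w))) (monom 1 (nat (wt n w div 2)))"
proof -
  have finL: "finite L" using finite_subset[OF L finite_longC] .
  have deg: "(\<Sum>\<alpha>\<in>L. m \<alpha>) = nat (wt n w div 2)" if m: "m \<in> mults n L w" for m
  proof -
    have "wt n w = (\<Sum>\<alpha>\<in>L. int (m \<alpha>) * wt n \<alpha>)" by (rule wt_mults[OF finL m])
    also have "\<dots> = (\<Sum>\<alpha>\<in>L. int (m \<alpha>) * 2)" using L wt_longC by (intro sum.cong) auto
    also have "\<dots> = 2 * int (\<Sum>\<alpha>\<in>L. m \<alpha>)" by (simp add: sum_distrib_right[symmetric] mult.commute)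
    finally show ?thesis by (simp del: of_nat_sum)
  qed
  have "qpart n L w = (\<Sum>m\<in>mults n L w. monom 1 (nat (wt n w div 2)))"
    unfolding qpart_def by (rule sum.cong[OF refl]) (simp add: deg)
  also have "\<dots> = smult (int (card (mults n L w))) (monom 1 (nat (wt n w div 2)))"
    by (simp add: smult_monom of_nat_monom mult_monom)
  finally show ?thesis .
qed

lemma altsum_sign:
  "altsum n P lam \<mu> = (\<Sum>\<sigma>\<in>Sn n. of_int (sign \<sigma>) * P (vsub (pact \<sigma> (vadd lam (rho n))) (vadd \<mu> (rho n))))"
  unfolding altsum_def by (rule sum.cong) (simp_all add: Sn_eq inversions_sign)

lemma rhs_term_sign:
  "rhs_term n cf lam \<mu> \<gamma> = (\<Sum>\<sigma>\<in>Sn n. of_int (sign \<sigma>) * smult (cf (vsub (dotact n \<sigma> lam) \<gamma>)) (KA n \<gamma> \<mu>))"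
  unfolding rhs_term_def by (rule sum.cong) (simp_all add: Sn_eq inversions_sign)

lemma rho_bounds: "0 \<le> rho n i" "rho n i \<le> int n"
  by (auto simp: rho_def)

lemma wt_eq_0_if_mults_rootsA:
  assumes "mults n (rootsA n) w \<noteq> {}"
  shows "wt n w = 0"
proof -
  obtain m where "m \<in> mults n (rootsA n) w" using assms by blast
  then show ?thesis using wt_mults[OF finite_rootsA] wt_rootsA by simp
qed

lemma wt_eq_0_if_PA_ne_0: "PA n w \<noteq> 0 \<Longrightarrow> wt n w = 0"
  unfolding PA_def qpart_def by (rule wt_eq_0_if_mults_rootsA) auto

lemma wt_eq_if_KA_ne_0:
  assumes "KA n \<gamma> \<mu> \<noteq> 0"
  shows "wt n \<gamma> = wt n \<mu>"
proof -
  obtain \<tau> where "\<tau> \<in> Sn n" and "PA n (vsub (pact \<tau> (vadd \<gamma> (rho n))) (vadd \<mu> (rho n))) \<noteq> 0"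
    using assms unfolding KA_def altsum_def by (auto elim: sum.not_neutral_contains_not_neutral)
  then have "\<tau> permutes {..<n}" "wt n (vsub (pact \<tau> (vadd \<gamma> (rho n))) (vadd \<mu> (rho n))) = 0"
    using wt_eq_0_if_PA_ne_0 by (auto simp: Sn_eq)
  then show ?thesis by (simp add: wt_vsub wt_vadd wt_pact)
qed

context
  fixes n :: nat and L :: "zvec set" and lam \<mu> :: zvec
  assumes L_long: "L \<subseteq> longC n" and L_inv: "perm_invariant n L" and lam: "lam \<in> Ptilde n"
begin

lemma finite_L: "finite L"
  using finite_subset[OF L_long finite_longC] .

text \<open>Every \<open>\<nu>\<close> that contributes below satisfies \<open>\<nu> \<le> \<sigma> \<circ> \<lambda>\<close> entrywise and \<open>|\<nu>| = |\<mu>|\<close>: the first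
  bounds \<open>\<nu> + \<rho>\<close> above by \<open>box_max\<close>, and then the second bounds it below.\<close>

definition box_max :: int where
  "box_max = \<bar>lam 0\<bar> + int n"

definition box :: "zvec set" where
  "box = {\<nu> \<in> vecs n. \<forall>i<n. wt n \<mu> - int n * box_max \<le> \<nu> i + rho n i \<and> \<nu> i + rho n i \<le> box_max}"

definition alternant :: "zvec \<Rightarrow> int poly" where
  "alternant \<nu> = (\<Sum>\<sigma>\<in>Sn n. of_int (sign \<sigma>) * qpart n L (vsub (dotact n \<sigma> lam) \<nu>))"

lemma finite_box: "finite box"
proof (rule finite_subset)
  let ?lo = "wt n \<mu> - int n * box_max - int n"
  show "box \<subseteq> {f. \<forall>i. (i \<in> {..<n} \<longrightarrow> f i \<in> {?lo..box_max}) \<and> (i \<notin> {..<n} \<longrightarrow> f i = 0)}"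
  proof
    fix f assume f: "f \<in> box"
    have "f i \<in> {?lo..box_max}" if "i < n" for i
      using f that rho_bounds[of n i] by (auto simp: box_def)
    moreover have "f i = 0" if "i \<notin> {..<n}" for i
      using f that by (auto simp: box_def vecs_def)
    ultimately show "f \<in> {f. \<forall>i. (i \<in> {..<n} \<longrightarrow> f i \<in> {?lo..box_max}) \<and> (i \<notin> {..<n} \<longrightarrow> f i = 0)}"
      by blast
  qed
  show "finite {f. \<forall>i. (i \<in> {..<n} \<longrightarrow> f i \<in> {?lo..box_max}) \<and> (i \<notin> {..<n} \<longrightarrow> f i = 0)}"
    by (rule finite_set_of_finite_funs) auto
qed

lemma box_subset_vecs: "box \<subseteq> vecs n"
  by (auto simp: box_def)

lemma dotact_in_box:
  assumes \<nu>: "\<nu> \<in> box" and \<tau>: "\<tau> permutes {..<n}"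
  shows "dotact n \<tau> \<nu> \<in> box"
proof -
  have "dotact n \<tau> \<nu> i + rho n i = \<nu> (inv \<tau> i) + rho n (inv \<tau> i)" for i
    using fun_cong[OF vadd_rho_dotact, of n \<tau> \<nu> i] by (simp add: pact_def)
  then show ?thesis
    using \<nu> dotact_in_vecs[OF _ \<tau>] permutes_inv_less_iff[OF \<tau>] by (auto simp: box_def)
qed

lemma in_boxI:
  assumes \<nu>: "\<nu> \<in> vecs n" and \<sigma>: "\<sigma> permutes {..<n}"
    and le: "\<And>i. i < n \<Longrightarrow> \<nu> i \<le> dotact n \<sigma> lam i" and wt: "wt n \<nu> = wt n \<mu>"
  shows "\<nu> \<in> box"
proof -
  have upper: "\<nu> i + rho n i \<le> box_max" if "i < n" for i
  proof -
    have "\<nu> i + rho n i \<le> lam (inv \<sigma> i) + rho n (inv \<sigma> i)"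
      using le[OF that] by (simp add: dotact_def pact_def)
    also have "\<dots> \<le> box_max"
    proof -
      have "lam (inv \<sigma> i) \<le> lam 0"
        using lam permutes_inv_less_iff[OF \<sigma>] that by (simp add: Ptilde_def)
      then show ?thesis using abs_ge_self[of "lam 0"] by (simp add: rho_def box_max_def)
    qed
    finally show ?thesis .
  qed
  have lower: "wt n \<mu> - int n * box_max \<le> \<nu> i + rho n i" if i: "i < n" for i
  proof -
    have "wt n \<nu> = \<nu> i + (\<Sum>j\<in>{..<n} - {i}. \<nu> j)"
      unfolding wt_def using i by (simp add: sum.remove)
    also have "(\<Sum>j\<in>{..<n} - {i}. \<nu> j) \<le> of_nat (card ({..<n} - {i})) * box_max"
      using upper rho_bounds[of n] by (intro sum_bounded_above) (smt (verit) Diff_iff lessThan_iff)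
    also have "\<dots> \<le> int n * box_max" using i by (intro mult_right_mono) (auto simp: box_max_def)
    finally show ?thesis using wt rho_bounds[of n i] by simp
  qed
  show ?thesis unfolding box_def using \<nu> upper lower by blast
qed

lemma alternant_dotact:
  assumes \<tau>: "\<tau> permutes {..<n}"
  shows "alternant (dotact n \<tau> \<nu>) = of_int (sign \<tau>) * alternant \<nu>"
proof -
  have shift: "vsub (dotact n \<sigma> lam) (dotact n \<tau> \<nu>) = pact \<tau> (vsub (dotact n (inv \<tau> \<circ> \<sigma>) lam) \<nu>)"
    if \<sigma>: "\<sigma> permutes {..<n}" for \<sigma>
  proof -
    have "inv (inv \<tau> \<circ> \<sigma>) = inv \<sigma> \<circ> \<tau>"
      using \<sigma> \<tau> by (simp add: o_inv_distrib permutes_bij bij_imp_bij_inv permutes_inv_inv)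
    then show ?thesis by (simp add: fun_eq_iff dotact_def pact_def permutes_inverses[OF \<tau>])
  qed
  have "alternant (dotact n \<tau> \<nu>)
      = (\<Sum>\<sigma>\<in>Sn n. of_int (sign \<sigma>) * qpart n L (vsub (dotact n (inv \<tau> \<circ> \<sigma>) lam) \<nu>))"
    unfolding alternant_def
    by (intro sum.cong refl) (simp add: Sn_eq shift qpart_pact[OF L_inv \<tau>])
  also have "\<dots> = (\<Sum>\<sigma>\<in>Sn n. of_int (sign (\<tau> \<circ> \<sigma>)) * qpart n L (vsub (dotact n (inv \<tau> \<circ> (\<tau> \<circ> \<sigma>)) lam) \<nu>))"
    unfolding Sn_eq by (rule setum_permutations_compose_left[OF \<tau>])
  also have "\<dots> = (\<Sum>\<sigma>\<in>Sn n. of_int (sign \<tau>) * (of_int (sign \<sigma>) * qpart n L (vsub (dotact n \<sigma> lam) \<nu>)))"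
  proof (intro sum.cong refl)
    fix \<sigma> assume "\<sigma> \<in> Sn n"
    then have \<sigma>: "\<sigma> permutes {..<n}" by (simp add: Sn_eq)
    have "inv \<tau> \<circ> (\<tau> \<circ> \<sigma>) = \<sigma>" by (simp add: o_assoc permutes_inv_o[OF \<tau>])
    moreover have "sign (\<tau> \<circ> \<sigma>) = sign \<tau> * sign \<sigma>"
      using sign_compose[OF permutes_imp_permutation[OF _ \<tau>] permutes_imp_permutation[OF _ \<sigma>]] by simp
    ultimately show "of_int (sign (\<tau> \<circ> \<sigma>)) * qpart n L (vsub (dotact n (inv \<tau> \<circ> (\<tau> \<circ> \<sigma>)) lam) \<nu>)
        = of_int (sign \<tau>) * (of_int (sign \<sigma>) * qpart n L (vsub (dotact n \<sigma> lam) \<nu>))"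
      by (simp add: mult.assoc)
  qed
  also have "\<dots> = of_int (sign \<tau>) * alternant \<nu>"
    unfolding alternant_def by (simp add: sum_distrib_left)
  finally show ?thesis .
qed

lemma alternant_eq_0:
  assumes ij: "i \<noteq> j" "i < n" "j < n" and eq: "vadd \<nu> (rho n) i = vadd \<nu> (rho n) j"
  shows "alternant \<nu> = 0"
proof -
  define t where "t = Transposition.transpose i j"
  have t: "t permutes {..<n}" unfolding t_def using ij by (intro permutes_swap_id) auto
  have "dotact n t \<nu> = \<nu>"
  proof
    fix k
    have "vadd \<nu> (rho n) (t k) = vadd \<nu> (rho n) k"
      using eq unfolding t_def by (auto simp: Transposition.transpose_def)
    then show "dotact n t \<nu> k = \<nu> k"
      unfolding t_def by (simp add: dotact_def pact_def)
  qed
  then have "alternant \<nu> = - alternant \<nu>"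
    using alternant_dotact[OF t, of \<nu>] ij by (simp add: t_def sign_swap_id)
  then show ?thesis by simp
qed

lemma qpart_union_eq_sum_box:
  assumes \<sigma>: "\<sigma> permutes {..<n}"
  shows "qpart n (rootsA n \<union> L) (vsub (pact \<sigma> (vadd lam (rho n))) (vadd \<mu> (rho n)))
    = (\<Sum>\<nu>\<in>box. qpart n L (vsub (dotact n \<sigma> lam) \<nu>) * PA n (vsub \<nu> \<mu>))"
proof -
  define \<beta> where "\<beta> = vsub (pact \<sigma> (vadd lam (rho n))) (vadd \<mu> (rho n))"
  define \<eta> where "\<eta> = dotact n \<sigma> lam"
  have \<eta>: "\<eta> \<in> vecs n"
    unfolding \<eta>_def using dotact_in_vecs[OF Ptilde_in_vecs[OF lam] \<sigma>] .
  have \<beta>: "vsub \<beta> (vsub \<eta> \<nu>) = vsub \<nu> \<mu>" for \<nu>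
    by (simp add: \<beta>_def \<eta>_def dotact_def fun_eq_iff)
  have inj: "inj_on (vsub \<eta>) box"
    by (rule inj_onI) (simp add: vsub_def fun_eq_iff)
  have "qpart n (rootsA n \<union> L) \<beta> = (\<Sum>\<delta>\<in>vsub \<eta> ` box. qpart n L \<delta> * qpart n (rootsA n) (vsub \<beta> \<delta>))"
  proof (rule qpart_union[OF finite_rootsA finite_L rho_positive_rootsA
        rho_positive_subset[OF rho_positive_longC L_long]])
    show "rootsA n \<inter> L = {}" using rootsA_disjoint_longC L_long by blast
    show "L \<subseteq> vecs n" using longC_subset_vecs L_long by blast
    show "finite (vsub \<eta> ` box)" using finite_box by simp
    show "vsub \<eta> ` box \<subseteq> vecs n" using box_subset_vecs \<eta> by (auto intro: vsub_in_vecs)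
    fix \<delta> assume \<delta>: "\<delta> \<in> vecs n" "mults n L \<delta> \<noteq> {}" "mults n (rootsA n) (vsub \<beta> \<delta>) \<noteq> {}"
    define \<nu> where "\<nu> = vsub \<eta> \<delta>"
    have \<delta>_eq: "\<delta> = vsub \<eta> \<nu>" by (simp add: \<nu>_def fun_eq_iff)
    have "wt n (vsub \<nu> \<mu>) = 0" using wt_eq_0_if_mults_rootsA \<delta>(3) \<beta> \<delta>_eq by metis
    moreover have "\<delta> i \<ge> 0" if "i < n" for i
      using \<delta>(2) mults_long_nonneg[OF L_long _ that] by blast
    ultimately have "\<nu> \<in> box"
      using in_boxI[OF vsub_in_vecs[OF \<eta> \<delta>(1)] \<sigma>] by (simp add: \<nu>_def \<eta>_def wt_vsub)
    then show "\<delta> \<in> vsub \<eta> ` box" using \<delta>_eq by blast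
  qed
  also have "\<dots> = (\<Sum>\<nu>\<in>box. qpart n L (vsub \<eta> \<nu>) * PA n (vsub \<nu> \<mu>))"
    by (simp add: sum.reindex[OF inj] \<beta> PA_def)
  finally show ?thesis unfolding \<beta>_def \<eta>_def .
qed

lemma altsum_eq_sum_box:
  "altsum n (qpart n (rootsA n \<union> L)) lam \<mu> = (\<Sum>\<nu>\<in>box. alternant \<nu> * PA n (vsub \<nu> \<mu>))"
proof -
  have "altsum n (qpart n (rootsA n \<union> L)) lam \<mu>
      = (\<Sum>\<sigma>\<in>Sn n. \<Sum>\<nu>\<in>box. of_int (sign \<sigma>) * qpart n L (vsub (dotact n \<sigma> lam) \<nu>) * PA n (vsub \<nu> \<mu>))"
    unfolding altsum_sign by (intro sum.cong refl) (simp add: Sn_eq qpart_union_eq_sum_box sum_distrib_left mult.assoc)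
  also have "\<dots> = (\<Sum>\<nu>\<in>box. alternant \<nu> * PA n (vsub \<nu> \<mu>))"
    unfolding alternant_def by (subst sum.swap) (simp add: sum_distrib_right)
  finally show ?thesis .
qed

lemma alternant_eq_0_off_orbits:
  assumes \<nu>: "\<nu> \<in> box" and off: "\<nu> \<notin> (\<lambda>(\<gamma>, \<tau>). dotact n \<tau> \<gamma>) ` ((Ptilde n \<inter> box) \<times> Sn n)"
  shows "alternant \<nu> = 0"
proof (rule ccontr)
  assume "alternant \<nu> \<noteq> 0"
  have "inj_on (vadd \<nu> (rho n)) {..<n}"
  proof (rule inj_onI)
    fix i j assume "i \<in> {..<n}" "j \<in> {..<n}" "vadd \<nu> (rho n) i = vadd \<nu> (rho n) j"
    then show "i = j" using alternant_eq_0[of i j \<nu>] \<open>alternant \<nu> \<noteq> 0\<close> by auto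
  qed
  then obtain \<tau> where \<tau>: "\<tau> permutes {..<n}" and dom: "dotact n (inv \<tau>) \<nu> \<in> Ptilde n"
    using exists_dotact_Ptilde \<nu> box_subset_vecs by blast
  have "dotact n (inv \<tau>) \<nu> \<in> box" using dotact_in_box[OF \<nu> permutes_inv[OF \<tau>]] .
  then have "(dotact n (inv \<tau>) \<nu>, \<tau>) \<in> (Ptilde n \<inter> box) \<times> Sn n" using dom \<tau> by (simp add: Sn_eq)
  then have "\<nu> \<in> (\<lambda>(\<gamma>, \<tau>). dotact n \<tau> \<gamma>) ` ((Ptilde n \<inter> box) \<times> Sn n)"
    by (rule image_eqI[rotated]) (simp add: dotact_inv_dotact(2)[OF \<tau>])
  then show False using off by contradiction
qed

lemma sum_box_eq_sum_Ptilde: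
  "(\<Sum>\<nu>\<in>box. alternant \<nu> * PA n (vsub \<nu> \<mu>)) = (\<Sum>\<gamma>\<in>Ptilde n \<inter> box. alternant \<gamma> * KA n \<gamma> \<mu>)"
proof -
  let ?F = "\<lambda>\<nu>. alternant \<nu> * PA n (vsub \<nu> \<mu>)"
  let ?G = "Ptilde n \<inter> box"
  let ?\<Phi> = "\<lambda>(\<gamma>, \<tau>). dotact n \<tau> \<gamma>"
  have inj: "inj_on ?\<Phi> (?G \<times> Sn n)"
    using dotact_inj_on_Ptilde by (auto simp: inj_on_def Sn_eq)
  have "(\<Sum>\<nu>\<in>box. ?F \<nu>) = (\<Sum>\<nu>\<in>?\<Phi> ` (?G \<times> Sn n). ?F \<nu>)"
    using alternant_eq_0_off_orbits
    by (intro sum.mono_neutral_right finite_box) (auto simp: dotact_in_box Sn_eq)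
  also have "\<dots> = (\<Sum>p\<in>?G \<times> Sn n. ?F (?\<Phi> p))"
    by (rule sum.reindex[OF inj, unfolded comp_def])
  also have "\<dots> = (\<Sum>\<gamma>\<in>?G. \<Sum>\<tau>\<in>Sn n. ?F (dotact n \<tau> \<gamma>))"
    by (simp add: sum.cartesian_product split_def)
  also have "\<dots> = (\<Sum>\<gamma>\<in>?G. alternant \<gamma> * KA n \<gamma> \<mu>)"
  proof (intro sum.cong refl)
    fix \<gamma>
    have "?F (dotact n \<tau> \<gamma>) = alternant \<gamma> *
        (of_int (sign \<tau>) * PA n (vsub (pact \<tau> (vadd \<gamma> (rho n))) (vadd \<mu> (rho n))))"
      if "\<tau> \<in> Sn n" for \<tau>
    proof -
      have "vsub (dotact n \<tau> \<gamma>) \<mu> = vsub (pact \<tau> (vadd \<gamma> (rho n))) (vadd \<mu> (rho n))"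
        by (simp add: dotact_def fun_eq_iff)
      then show ?thesis using that alternant_dotact[of \<tau> \<gamma>] by (simp add: Sn_eq mult_ac)
    qed
    then show "(\<Sum>\<tau>\<in>Sn n. ?F (dotact n \<tau> \<gamma>)) = alternant \<gamma> * KA n \<gamma> \<mu>"
      by (simp add: KA_def altsum_sign sum_distrib_left)
  qed
  finally show ?thesis .
qed

lemma alternant_mult_KA:
  "alternant \<gamma> * KA n \<gamma> \<mu>
     = monom 1 (nat ((wt n lam - wt n \<mu>) div 2)) * rhs_term n (\<lambda>\<beta>. int (card (mults n L \<beta>))) lam \<mu> \<gamma>"
proof (cases "KA n \<gamma> \<mu> = 0")
  case True
  then show ?thesis by (simp add: rhs_term_def)
next
  case False
  define d where "d = nat ((wt n lam - wt n \<mu>) div 2)"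
  define c where "c = (\<lambda>\<sigma>. int (card (mults n L (vsub (dotact n \<sigma> lam) \<gamma>))))"
  have "qpart n L (vsub (dotact n \<sigma> lam) \<gamma>) = smult (c \<sigma>) (monom 1 d)" if "\<sigma> \<in> Sn n" for \<sigma>
    using that wt_eq_if_KA_ne_0[OF False] qpart_long[OF L_long]
    by (simp add: c_def d_def wt_vsub wt_dotact Sn_eq)
  then have "alternant \<gamma> = (\<Sum>\<sigma>\<in>Sn n. of_int (sign \<sigma>) * smult (c \<sigma>) (monom 1 d))"
    unfolding alternant_def by (intro sum.cong) simp_all
  also have "\<dots> * KA n \<gamma> \<mu> = monom 1 d * (\<Sum>\<sigma>\<in>Sn n. of_int (sign \<sigma>) * smult (c \<sigma>) (KA n \<gamma> \<mu>))"
    by (simp add: sum_distrib_left sum_distrib_right ac_simps)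
  finally show ?thesis by (simp add: rhs_term_sign c_def d_def)
qed

theorem altsum_eq_rhs:
  "altsum n (qpart n (rootsA n \<union> L)) lam \<mu> = rhs n (\<lambda>\<beta>. int (card (mults n L \<beta>))) lam \<mu>"
proof -
  let ?cf = "\<lambda>\<beta>. int (card (mults n L \<beta>))"
  let ?T = "{\<gamma> \<in> Ptilde n. rhs_term n ?cf lam \<mu> \<gamma> \<noteq> 0}"
  have "?T \<subseteq> Ptilde n \<inter> box"
  proof
    fix \<gamma> assume "\<gamma> \<in> ?T"
    then have \<gamma>: "\<gamma> \<in> Ptilde n" and "rhs_term n ?cf lam \<mu> \<gamma> \<noteq> 0" by auto
    then obtain \<sigma> where \<sigma>: "\<sigma> \<in> Sn n" and "(-1) ^ inversions n \<sigma> * smult (?cf (vsub (dotact n \<sigma> lam) \<gamma>)) (KA n \<gamma> \<mu>) \<noteq> 0"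
      unfolding rhs_term_def by (auto elim: sum.not_neutral_contains_not_neutral)
    then have "mults n L (vsub (dotact n \<sigma> lam) \<gamma>) \<noteq> {}" and KA: "KA n \<gamma> \<mu> \<noteq> 0" by auto
    then obtain m where "m \<in> mults n L (vsub (dotact n \<sigma> lam) \<gamma>)" by blast
    from mults_long_nonneg[OF L_long this] have "\<gamma> \<in> box"
      using in_boxI[OF Ptilde_in_vecs[OF \<gamma>] _ _ wt_eq_if_KA_ne_0[OF KA]] \<sigma> by (simp add: Sn_eq)
    with \<gamma> show "\<gamma> \<in> Ptilde n \<inter> box" by blast
  qed
  then have "rhs n ?cf lam \<mu> = monom 1 (nat ((wt n lam - wt n \<mu>) div 2)) * (\<Sum>\<gamma>\<in>Ptilde n \<inter> box. rhs_term n ?cf lam \<mu> \<gamma>)"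
    unfolding rhs_def using finite_box by (intro arg_cong[where f = "times _"] sum.mono_neutral_left) auto
  also have "\<dots> = (\<Sum>\<gamma>\<in>Ptilde n \<inter> box. alternant \<gamma> * KA n \<gamma> \<mu>)"
    by (simp add: sum_distrib_left alternant_mult_KA)
  finally show ?thesis by (simp add: altsum_eq_sum_box sum_box_eq_sum_Ptilde)
qed

end

theorem mainTheorem2:
  fixes n :: nat and lam \<mu> :: "nat \<Rightarrow> int"
  assumes "n \<ge> 1"
    and "is_partition n lam" and "is_partition n \<mu>"
    and "wt n lam \<ge> wt n \<mu>"
  shows "KC n lam \<mu> = rhs n (cC n) lam \<mu> \<and> KD n lam \<mu> = rhs n (dD n) lam \<mu>"
proof -
  \<comment> \<open>only the dominance of \<open>\<lambda>\<close> is needed\<close>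
  have lam: "lam \<in> Ptilde n" using assms(2) by (simp add: is_partition_def)
  have "KC n lam \<mu> = rhs n (cC n) lam \<mu>"
    using altsum_eq_rhs[OF subset_refl perm_invariant_longC lam]
    by (simp add: KC_def PC_def[abs_def] cC_def[abs_def])
  moreover have "KD n lam \<mu> = rhs n (dD n) lam \<mu>"
    using altsum_eq_rhs[OF longD_subset_longC perm_invariant_longD lam]
    by (simp add: KD_def PD_def[abs_def] dD_def[abs_def])
  ultimately show ?thesis ..
qed

end
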